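(* Let $F:\mathbb{R}\to\mathbb{R}$ be a function (identified with its graph in $\mathbb{R}^2$). If $A\cap F\neq\emptyset$ for every closed set $A\subset\mathbb{R}^2$ such that $\pi(A)$ contains a nondegenerate interval, then $F$ is a connected subspace of $\mathbb{R}^2$.
   Context: $\pi:\mathbb{R}^2\to\mathbb{R}$ is the projection $(x,y)\mapsto x$. *)

theory Defs
  imports "HOL-Analysis.Analysis"
begin

text \<open>R^2 is modelled as real \<times> real; the projection pi is fst.
  The graph of F : R -> R is {(x, F x) | x}.\<close>

definition graph :: "(real \<Rightarrow> real) \<Rightarrow> (real \<times> real) set" where
  "graph F = {(x, F x) | x. True}"

definition nondegenerate_interval :: "real set \<Rightarrow> bool" where
  "nondegenerate_interval I \<longleftrightarrow> is_interval I \<and> (\<exists>a\<in>I. \<exists>b\<in>I. a \<noteq> b)"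

end

theory Submission
  imports Defs
begin

text \<open>Suppose the graph \<open>G\<close> of \<open>F\<close> is disconnected. Since the plane is hereditarily normal, \<open>G\<close> is
  covered by two disjoint open sets \<open>U\<close>, \<open>V\<close>, each meeting \<open>G\<close>. The closed set \<open>K = -(U \<union> V)\<close>
  misses \<open>G\<close>, so by hypothesis \<open>\<pi>(K)\<close> contains no interval: the vertical lines contained in
  \<open>U \<union> V\<close> lie over a dense set of abscissae. Each such line is connected, hence lies entirely in
  \<open>U\<close> or in \<open>V\<close>. If \<open>(x, F x) \<in> U\<close> and \<open>(x', F x') \<in> V\<close> with \<open>x'\<close> close to \<open>x\<close>, a line over a
  point between them would meet both, so \<open>{x. (x, F x) \<in> U}\<close> and \<open>{x. (x, F x) \<in> V}\<close> are
  disjoint open sets covering \<open>\<real>\<close>, both nonempty: a contradiction.\<close>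

lemma nondegenerate_interval_greaterThanLessThan:
  fixes a b :: real
  assumes "a < b"
  shows "nondegenerate_interval {a<..<b}"
  unfolding nondegenerate_interval_def
  using assms by (intro conjI is_interval_box bexI[of _ "(2*a+b)/3"] bexI[of _ "(a+2*b)/3"]) auto

lemma not_connected_imp_disjoint_open_cover:
  fixes S :: "'a::metric_space set"
  assumes "\<not> connected S"
  obtains U V where "open U" "open V" "U \<inter> V = {}" "S \<subseteq> U \<union> V" "U \<inter> S \<noteq> {}" "V \<inter> S \<noteq> {}"
proof -
  obtain C1 C2 where C: "C1 \<union> C2 = S" "C1 \<noteq> {}" "C2 \<noteq> {}" "separatedin euclidean C1 C2"
    using assms unfolding connectedin_iff_connected[symmetric] connectedin_eq_not_separated by auto
  then obtain U V where "open U" "open V" "C1 \<subseteq> U" "C2 \<subseteq> V" "disjnt U V"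
    using metrizable_space_separation[OF metrizable_space_euclidean] by (metis open_openin)
  with C show thesis
    by (intro that[of U V]) (auto simp: disjnt_def)
qed

lemma open_graph_preimage:
  fixes F :: "real \<Rightarrow> 'b::real_normed_vector"
  assumes "open U" "open V" "U \<inter> V = {}"
    and graph: "\<And>x. (x, F x) \<in> U \<union> V"
    and lines: "\<And>a b. a < b \<Longrightarrow> \<exists>d\<in>{a<..<b}. {d} \<times> UNIV \<subseteq> U \<union> V"
  shows "open {x. (x, F x) \<in> U}"
  unfolding open_subopen[of "{x. (x, F x) \<in> U}"]
proof
  fix x assume "x \<in> {x. (x, F x) \<in> U}"
  then obtain A B where AB: "open A" "open B" "(x, F x) \<in> A \<times> B" "A \<times> B \<subseteq> U"
    using open_prod_elim[OF \<open>open U\<close>] by blast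
  have "x' \<in> {x. (x, F x) \<in> U}" if "x' \<in> A" for x'
  proof (rule ccontr)
    assume "x' \<notin> {x. (x, F x) \<in> U}"
    then have "(x', F x') \<in> V" using graph[of x'] by blast
    then obtain A' B' where A'B': "open A'" "open B'" "(x', F x') \<in> A' \<times> B'" "A' \<times> B' \<subseteq> V"
      using open_prod_elim[OF \<open>open V\<close>] by blast
    then have "open (A \<inter> A')" "x' \<in> A \<inter> A'"
      using AB \<open>x' \<in> A\<close> by auto
    then obtain e where "e > 0" "ball x' e \<subseteq> A \<inter> A'"
      using open_contains_ball_eq by blast
    moreover obtain d where "d \<in> {x' - e<..<x' + e}" and line: "{d} \<times> UNIV \<subseteq> U \<union> V"
      using lines[of "x' - e" "x' + e"] \<open>e > 0\<close> by auto
    ultimately have "d \<in> A \<inter> A'"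
      by (auto simp: dist_real_def)
    then have "U \<inter> ({d} \<times> UNIV) \<noteq> {}" "V \<inter> ({d} \<times> UNIV) \<noteq> {}"
      using AB A'B' by auto
    moreover have "connected ({d} \<times> (UNIV :: 'b set))"
      using connected_UNIV by (simp add: connected_Times)
    ultimately show False
      using connectedD[of "{d} \<times> UNIV" U V] line assms(1-3) by auto
  qed
  then show "\<exists>T. open T \<and> x \<in> T \<and> T \<subseteq> {x. (x, F x) \<in> U}"
    using AB by blast
qed

lemma vertical_line_between:
  fixes F :: "real \<Rightarrow> real"
  assumes "\<And>A :: (real \<times> real) set. closed A \<Longrightarrow>
             (\<exists>I. nondegenerate_interval I \<and> I \<subseteq> fst ` A) \<Longrightarrow> A \<inter> graph F \<noteq> {}"
    and "open W" "graph F \<subseteq> W" "a < b"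
  shows "\<exists>d\<in>{a<..<b}. {d} \<times> UNIV \<subseteq> W"
proof (rule ccontr)
  assume "\<not> ?thesis"
  then have "{a<..<b} \<subseteq> fst ` (- W)"
    by (force simp: subset_iff)
  then have "- W \<inter> graph F \<noteq> {}"
    using assms(1)[of "- W"] \<open>open W\<close> nondegenerate_interval_greaterThanLessThan[OF \<open>a < b\<close>]
    by blast
  with \<open>graph F \<subseteq> W\<close> show False
    by blast
qed

theorem lemma2:
  fixes F :: "real \<Rightarrow> real"
  assumes "\<And>A :: (real \<times> real) set. closed A \<Longrightarrow>
             (\<exists>I. nondegenerate_interval I \<and> I \<subseteq> fst ` A) \<Longrightarrow> A \<inter> graph F \<noteq> {}"
  shows "connected (graph F)"
proof (rule ccontr)
  assume "\<not> connected (graph F)"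
  then obtain U V where UV: "open U" "open V" "U \<inter> V = {}" "graph F \<subseteq> U \<union> V"
    and "U \<inter> graph F \<noteq> {}" "V \<inter> graph F \<noteq> {}"
    by (rule not_connected_imp_disjoint_open_cover)
  then have nonempty: "{x. (x, F x) \<in> U} \<noteq> {}" "{x. (x, F x) \<in> V} \<noteq> {}"
    by (auto simp: graph_def)
  have graph: "(x, F x) \<in> U \<union> V" for x
    using UV(4) by (auto simp: graph_def)
  have lines: "\<exists>d\<in>{a<..<b}. {d} \<times> UNIV \<subseteq> U \<union> V" if "a < b" for a b
    using vertical_line_between[OF assms _ UV(4) that] UV(1,2) by blast
  have "open {x. (x, F x) \<in> U}"
    using UV(1-3) graph lines by (rule open_graph_preimage)
  moreover have "open {x. (x, F x) \<in> V}"
    using open_graph_preimage[of V U F] UV(1-3) graph lines by (simp add: Int_commute Un_commute)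
  moreover have "{x. (x, F x) \<in> U} \<inter> {x. (x, F x) \<in> V} \<inter> UNIV = {}"
    using UV(3) by blast
  moreover have "UNIV \<subseteq> {x. (x, F x) \<in> U} \<union> {x. (x, F x) \<in> V}"
    using graph by blast
  ultimately show False
    using connectedD[OF connected_UNIV, of "{x. (x, F x) \<in> U}" "{x. (x, F x) \<in> V}"] nonempty
    by blast
qed

end
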